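(* Let $G$ be a simple graph, $r\ge 1$ an integer, and $S$ an independent $r$-incident multiset of vertices of $G$. Then there exist an independent $r$-incident multiset $S'$ of vertices of $G$ and an independent set $A\subseteq V(G)$ such that: (i) $\mathrm{supp}(S')$ contains no two vertices that are twins; (ii) $\mathrm{supp}(S')$ contains no vertex of degree $0$ or $1$; (iii) $S'(u)\in\{0,1,\dots,2^{r-1}-1\}$ for every vertex $u$; and $G\star^r S = G\star^1 A\star^r S'$.
   Context: Graphs are finite, simple and undirected; $N_G(u)$ is the set of neighbours of $u$. Two vertices $u,v$ are twins if $N_G(u)\setminus\{v\}=N_G(v)\setminus\{u\}$. A multiset $S$ of vertices is identified with its multiplicity function $S:V(G)\to\mathbb N$; its support is $\mathrm{supp}(S)=\{u: S(u)\ge 1\}$. A set $D$ of vertices is independent if no two vertices of $D$ are adjacent; a multiset is independent if its support is. For an integer $r\ge1$, a multiset $S$ is $r$-incident if for every $k\in\{0,1,\dots,r-1\}$ and every set $K\subseteq V(G)\setminus\mathrm{supp}(S)$ with $|K|=k+2$, the number $\sum_{u\in\bigcap_{v\in K}N_G(v)}S(u)$ is a multiple of $2^{\,r-k-\delta(k)}$, where $\delta(k)=1$ if $k=0$ and $\delta(k)=0$ otherwise. For an independent $r$-incident multiset $S$, the $r$-local complementation $G\star^r S$ is the graph on $V(G)$ in which distinct vertices $a,b$ are adjacent iff exactly one of the following holds: $a\sim_G b$, or $\sum_{u\in N_G(a)\cap N_G(b)}S(u)\equiv 2^{r-1}\pmod{2^r}$. For $r=1$ and an independent set $A=\{u_1,\dots,u_k\}$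 (viewed as a multiset with multiplicities $1$), $G\star^1 A = G\star u_1\star\cdots\star u_k$, where the local complementation $G\star u$ replaces the subgraph induced on $N_G(u)$ by its complement. *)

theory Defs
  imports Main
begin

definition simple_graph :: "'a set \<Rightarrow> ('a \<Rightarrow> 'a \<Rightarrow> bool) \<Rightarrow> bool" where
  "simple_graph V E \<longleftrightarrow> finite V \<and> (\<forall>a b. E a b \<longrightarrow> a \<in> V \<and> b \<in> V)
     \<and> (\<forall>a b. E a b \<longrightarrow> E b a) \<and> (\<forall>a. \<not> E a a)"

definition vmultiset :: "'a set \<Rightarrow> ('a \<Rightarrow> nat) \<Rightarrow> bool" where
  "vmultiset V S \<longleftrightarrow> (\<forall>u. u \<notin> V \<longrightarrow> S u = 0)"

definition nbr :: "'a set \<Rightarrow> ('a \<Rightarrow> 'a \<Rightarrow> bool) \<Rightarrow> 'a \<Rightarrow> 'a set" where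
  "nbr V E u = {v \<in> V. E u v}"

definition supp :: "'a set \<Rightarrow> ('a \<Rightarrow> nat) \<Rightarrow> 'a set" where
  "supp V S = {u \<in> V. S u \<ge> 1}"

definition twins :: "'a set \<Rightarrow> ('a \<Rightarrow> 'a \<Rightarrow> bool) \<Rightarrow> 'a \<Rightarrow> 'a \<Rightarrow> bool" where
  "twins V E u v \<longleftrightarrow> nbr V E u - {v} = nbr V E v - {u}"

definition indep_set :: "('a \<Rightarrow> 'a \<Rightarrow> bool) \<Rightarrow> 'a set \<Rightarrow> bool" where
  "indep_set E D \<longleftrightarrow> (\<forall>u\<in>D. \<forall>v\<in>D. \<not> E u v)"

definition indep_mset :: "'a set \<Rightarrow> ('a \<Rightarrow> 'a \<Rightarrow> bool) \<Rightarrow> ('a \<Rightarrow> nat) \<Rightarrow> bool" where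
  "indep_mset V E S \<longleftrightarrow> indep_set E (supp V S)"

definition delta :: "nat \<Rightarrow> nat" where
  "delta k = (if k = 0 then 1 else 0)"

definition r_incident :: "'a set \<Rightarrow> ('a \<Rightarrow> 'a \<Rightarrow> bool) \<Rightarrow> nat \<Rightarrow> ('a \<Rightarrow> nat) \<Rightarrow> bool" where
  "r_incident V E r S \<longleftrightarrow>
     (\<forall>k < r. \<forall>K. K \<subseteq> V - supp V S \<and> card K = k + 2 \<longrightarrow>
        (2::nat) ^ (r - k - delta k) dvd (\<Sum>u \<in> (\<Inter>v\<in>K. nbr V E v). S u))"

definition rlc :: "'a set \<Rightarrow> ('a \<Rightarrow> 'a \<Rightarrow> bool) \<Rightarrow> nat \<Rightarrow> ('a \<Rightarrow> nat) \<Rightarrow> 'a \<Rightarrow> 'a \<Rightarrow> bool" where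
  "rlc V E r S a b \<longleftrightarrow> a \<in> V \<and> b \<in> V \<and> a \<noteq> b \<and>
     (E a b \<noteq> ((\<Sum>u \<in> nbr V E a \<inter> nbr V E b. S u) mod 2 ^ r = 2 ^ (r - 1)))"

definition lc :: "'a set \<Rightarrow> ('a \<Rightarrow> 'a \<Rightarrow> bool) \<Rightarrow> 'a \<Rightarrow> 'a \<Rightarrow> 'a \<Rightarrow> bool" where
  "lc V E u a b \<longleftrightarrow> a \<in> V \<and> b \<in> V \<and> a \<noteq> b \<and>
     (E a b \<noteq> (a \<in> nbr V E u \<and> b \<in> nbr V E u))"

fun lc_seq :: "'a set \<Rightarrow> ('a \<Rightarrow> 'a \<Rightarrow> bool) \<Rightarrow> 'a list \<Rightarrow> 'a \<Rightarrow> 'a \<Rightarrow> bool" where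
  "lc_seq V E [] = E"
| "lc_seq V E (u # us) = lc_seq V (lc V E u) us"

definition lc1 :: "'a set \<Rightarrow> ('a \<Rightarrow> 'a \<Rightarrow> bool) \<Rightarrow> 'a set \<Rightarrow> 'a \<Rightarrow> 'a \<Rightarrow> bool" where
  "lc1 V E A = lc_seq V E (SOME xs. set xs = A \<and> distinct xs)"

end

theory Submission
  imports Defs
begin

(* Only the weights \<sigma>\<^sub>S(K) = cn_sum V E S K that S places on the common neighbourhood
of a set K of at least two vertices enter r-incidence and r-local complementation. A vertex
of degree at most one lies in no such neighbourhood, and twins in the independent support
of S have equal neighbourhoods, so the weight of each twin class can be moved onto one
representative without changing any \<sigma>\<^sub>S(K). Write the resulting multiset as
S' + 2^(r-1) T with S' < 2^(r-1). Independence and r-incidence make \<sigma>\<^sub>S({a,b}) a multiple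
of 2^(r-1), and G \<star>^r S toggles the pair ab iff the quotient is odd. This quotient exceeds
the one for S' by \<sigma>\<^sub>T({a,b}), whose parity is that of the number of common neighbours of
a and b in A = {u. T u odd}; that is exactly what local complementation along the
independent set A toggles. Since A lies in the support of S, these complementations change
no edge at a support vertex, so the weights that S' places on common neighbourhoods stay the
same. *)

definition cn_sum :: "'a set \<Rightarrow> ('a \<Rightarrow> 'a \<Rightarrow> bool) \<Rightarrow> ('a \<Rightarrow> nat) \<Rightarrow> 'a set \<Rightarrow> nat" where
  "cn_sum V E S K = (\<Sum>u \<in> (\<Inter>v\<in>K. nbr V E v). S u)"

lemma r_incident_cn_sum:
  "r_incident V E r S \<longleftrightarrow>
     (\<forall>k < r. \<forall>K. K \<subseteq> V - supp V S \<and> card K = k + 2 \<longrightarrow> 2 ^ (r - k - delta k) dvd cn_sum V E S K)"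
  unfolding r_incident_def cn_sum_def ..

lemma rlc_cn_sum:
  "rlc V E r S a b \<longleftrightarrow> a \<in> V \<and> b \<in> V \<and> a \<noteq> b \<and>
     (E a b \<noteq> (cn_sum V E S {a, b} mod 2 ^ r = 2 ^ (r - 1)))"
  unfolding rlc_def cn_sum_def by simp

lemma cn_sum_eq:
  assumes "simple_graph V E" and "K \<noteq> {}"
  shows "cn_sum V E S K = (\<Sum>u | u \<in> V \<and> K \<subseteq> nbr V E u. S u)"
proof -
  have "(\<Inter>v\<in>K. nbr V E v) = {u \<in> V. K \<subseteq> nbr V E u}"
    using assms unfolding simple_graph_def nbr_def by blast
  then show ?thesis unfolding cn_sum_def by simp
qed

lemma sum_restrict_supp:
  assumes "finite X" and "X \<subseteq> V" and "supp V S \<subseteq> D"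
  shows "(\<Sum>u\<in>X. S u) = (\<Sum>u\<in>X \<inter> D. S u)"
  using assms unfolding supp_def by (intro sum.mono_neutral_right) auto

lemma sum_fibres:
  assumes "finite P" and "finite T"
  shows "(\<Sum>v\<in>T. \<Sum>u | u \<in> P \<and> f u = v. g u) = (\<Sum>u | u \<in> P \<and> f u \<in> T. g u)"
proof -
  have "(\<Sum>v\<in>T. \<Sum>u | u \<in> P \<and> f u = v. g u) =
      (\<Sum>v\<in>T. \<Sum>u | u \<in> {u \<in> P. f u \<in> T} \<and> f u = v. g u)"
    by (intro sum.cong) (auto intro: arg_cong[where f = "sum g"])
  also have "\<dots> = (\<Sum>u | u \<in> P \<and> f u \<in> T. g u)"
    using assms by (intro sum.group) auto
  finally show ?thesis .
qed

lemma indep_set_if_subset_supp: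
  assumes "indep_mset V E S" and "A \<subseteq> supp V S"
  shows "indep_set E A"
  using assms unfolding indep_mset_def indep_set_def by blast

lemma twins_iff_nbr_eq:
  assumes "\<not> E u v" and "\<not> E v u"
  shows "twins V E u v \<longleftrightarrow> nbr V E u = nbr V E v"
  using assms unfolding twins_def nbr_def by blast

lemma cn_sum_eq_0_if_meets_supp:
  assumes "indep_mset V E S" and "supp V T \<subseteq> supp V S" and "w \<in> K" and "w \<in> supp V S"
  shows "cn_sum V E T K = 0"
proof -
  have "T u = 0" if "u \<in> nbr V E w" for u
    using assms that unfolding indep_mset_def indep_set_def supp_def nbr_def by fastforce
  then show ?thesis
    unfolding cn_sum_def using \<open>w \<in> K\<close> by (intro sum.neutral) blast
qed

lemma cn_sum_cong_on_supp:
  assumes "finite V" and "K \<noteq> {}" and "supp V S \<subseteq> D"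
    and "\<And>v. v \<in> K \<Longrightarrow> nbr V E' v \<inter> D = nbr V E v \<inter> D"
  shows "cn_sum V E' S K = cn_sum V E S K"
proof -
  have common_V: "(\<Inter>v\<in>K. nbr V F v) \<subseteq> V" for F
    using \<open>K \<noteq> {}\<close> unfolding nbr_def by auto
  then have restrict: "cn_sum V F S K = (\<Sum>u\<in>(\<Inter>v\<in>K. nbr V F v) \<inter> D. S u)" for F
    unfolding cn_sum_def using assms(1,3) by (intro sum_restrict_supp) (auto intro: finite_subset)
  have "(\<Inter>v\<in>K. nbr V E' v) \<inter> D = (\<Inter>v\<in>K. nbr V E v) \<inter> D"
    using assms(4) by blast
  then show ?thesis
    unfolding restrict by simp
qed

lemma cn_sum_drop_low_degree:
  assumes "simple_graph V E" and "2 \<le> card K"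
  shows "cn_sum V E (\<lambda>u. if 2 \<le> card (nbr V E u) then S u else 0) K = cn_sum V E S K"
proof -
  have "K \<noteq> {}" using assms(2) by auto
  have "finite (nbr V E u)" for u
    using assms(1) unfolding simple_graph_def nbr_def by simp
  then have "2 \<le> card (nbr V E u)" if "K \<subseteq> nbr V E u" for u
    using assms(2) card_mono that by (blast intro: order_trans)
  then show ?thesis
    unfolding cn_sum_eq[OF assms(1) \<open>K \<noteq> {}\<close>] by (intro sum.cong) auto
qed

lemma cn_sum_pushforward:
  assumes "simple_graph V E" and "K \<noteq> {}"
    and f: "\<And>u. u \<in> supp V S \<Longrightarrow> f u \<in> V \<and> nbr V E (f u) = nbr V E u"
  shows "cn_sum V E (\<lambda>v. \<Sum>u | u \<in> supp V S \<and> f u = v. S u) K = cn_sum V E S K"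
proof -
  let ?C = "{v \<in> V. K \<subseteq> nbr V E v}"
  have "finite V" using assms(1) unfolding simple_graph_def by simp
  moreover have "supp V S \<subseteq> V" unfolding supp_def by auto
  ultimately have "finite (supp V S)" by (rule finite_subset[rotated])
  then have "cn_sum V E (\<lambda>v. \<Sum>u | u \<in> supp V S \<and> f u = v. S u) K =
      (\<Sum>u | u \<in> supp V S \<and> f u \<in> ?C. S u)"
    unfolding cn_sum_eq[OF assms(1,2)] using \<open>finite V\<close> by (intro sum_fibres) auto
  also have "{u. u \<in> supp V S \<and> f u \<in> ?C} = ?C \<inter> supp V S"
    using f \<open>supp V S \<subseteq> V\<close> by auto
  also have "(\<Sum>u\<in>?C \<inter> supp V S. S u) = cn_sum V E S K"
    unfolding cn_sum_eq[OF assms(1,2)] using \<open>finite V\<close> by (intro sum_restrict_supp[symmetric]) auto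
  finally show ?thesis .
qed

lemma merge_twins:
  assumes "simple_graph V E"
  obtains M where "vmultiset V M" and "supp V M \<subseteq> supp V S"
    and "\<And>u v. u \<in> supp V M \<Longrightarrow> v \<in> supp V M \<Longrightarrow> nbr V E u = nbr V E v \<Longrightarrow> u = v"
    and "\<And>K. K \<noteq> {} \<Longrightarrow> cn_sum V E M K = cn_sum V E S K"
proof -
  define P where "P = supp V S"
  define rep where "rep u = inv_into P (nbr V E) (nbr V E u)" for u
  define M where "M v = (\<Sum>u | u \<in> P \<and> rep u = v. S u)" for v
  have rep: "rep u \<in> P" "nbr V E (rep u) = nbr V E u" if "u \<in> P" for u
    unfolding rep_def using that by (simp_all add: inv_into_into f_inv_into_f)
  have M_nonzero: "v \<in> rep ` P" if "M v \<noteq> 0" for v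
  proof -
    have "{u. u \<in> P \<and> rep u = v} \<noteq> {}"
      using that unfolding M_def by (metis sum.empty)
    then show ?thesis by blast
  qed
  then have supp_M: "supp V M \<subseteq> rep ` P"
    unfolding supp_def by auto
  have rep_idem: "rep w = w" if "w \<in> rep ` P" for w
    using that rep(2) unfolding rep_def by auto
  show thesis
  proof
    show "vmultiset V M"
      unfolding vmultiset_def using M_nonzero rep(1) unfolding P_def supp_def by blast
    show "supp V M \<subseteq> supp V S"
      using supp_M rep(1) unfolding P_def by blast
    show "u = v" if "u \<in> supp V M" and "v \<in> supp V M" and "nbr V E u = nbr V E v" for u v
      using rep_idem[of u] rep_idem[of v] that supp_M unfolding rep_def by auto
    show "cn_sum V E M K = cn_sum V E S K" if "K \<noteq> {}" for K
      unfolding M_def P_def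
    proof (rule cn_sum_pushforward[OF assms that])
      show "rep u \<in> V \<and> nbr V E (rep u) = nbr V E u" if "u \<in> supp V S" for u
        using rep that unfolding P_def supp_def by auto
    qed
  qed
qed

lemma reduced_multiset:
  assumes "simple_graph V E" and "indep_mset V E S"
  obtains M where "vmultiset V M" and "supp V M \<subseteq> supp V S"
    and "\<And>u v. u \<in> supp V M \<Longrightarrow> v \<in> supp V M \<Longrightarrow> u \<noteq> v \<Longrightarrow> \<not> twins V E u v"
    and "\<And>u. u \<in> supp V M \<Longrightarrow> 2 \<le> card (nbr V E u)"
    and "\<And>K. 2 \<le> card K \<Longrightarrow> cn_sum V E M K = cn_sum V E S K"
proof -
  define S\<^sub>0 where "S\<^sub>0 u = (if 2 \<le> card (nbr V E u) then S u else 0)" for u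
  obtain M where M: "vmultiset V M" "supp V M \<subseteq> supp V S\<^sub>0"
    "\<And>u v. u \<in> supp V M \<Longrightarrow> v \<in> supp V M \<Longrightarrow> nbr V E u = nbr V E v \<Longrightarrow> u = v"
    "\<And>K. K \<noteq> {} \<Longrightarrow> cn_sum V E M K = cn_sum V E S\<^sub>0 K"
    using merge_twins[OF assms(1)] by blast
  have supp_S\<^sub>0: "supp V S\<^sub>0 \<subseteq> {u \<in> supp V S. 2 \<le> card (nbr V E u)}"
    unfolding S\<^sub>0_def supp_def by auto
  have "\<not> twins V E u v" if "u \<in> supp V M" "v \<in> supp V M" "u \<noteq> v" for u v
  proof -
    have "indep_set E (supp V M)"
      using M(2) supp_S\<^sub>0 by (intro indep_set_if_subset_supp[OF assms(2)]) blast
    then have "twins V E u v \<longleftrightarrow> nbr V E u = nbr V E v"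
      using that unfolding indep_set_def by (intro twins_iff_nbr_eq) auto
    then show ?thesis using M(3) that by blast
  qed
  moreover have "cn_sum V E M K = cn_sum V E S K" if "2 \<le> card K" for K
  proof -
    have "K \<noteq> {}" using that by auto
    then show ?thesis
      using M(4) cn_sum_drop_low_degree[OF assms(1) that] unfolding S\<^sub>0_def by simp
  qed
  ultimately show thesis
    using that M(1,2) supp_S\<^sub>0 by blast
qed

lemma r_incident_pair_dvd:
  assumes "r_incident V E r S" and "indep_mset V E S" and "r \<ge> 1"
    and "a \<in> V" and "b \<in> V" and "a \<noteq> b"
  shows "2 ^ (r - 1) dvd cn_sum V E S {a, b}"
proof (cases "a \<in> supp V S \<or> b \<in> supp V S")
  case True
  then obtain w where "w \<in> {a, b}" and "w \<in> supp V S" by blast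
  then have "cn_sum V E S {a, b} = 0"
    by (rule cn_sum_eq_0_if_meets_supp[OF \<open>indep_mset V E S\<close> order_refl])
  then show ?thesis by simp
next
  case False
  then have "{a, b} \<subseteq> V - supp V S" and "card {a, b} = 0 + 2"
    using assms by auto
  moreover have "0 < r" using assms(3) by simp
  ultimately have "2 ^ (r - 0 - delta 0) dvd cn_sum V E S {a, b}"
    using assms(1) unfolding r_incident_cn_sum by blast
  then show ?thesis by (simp add: delta_def)
qed

lemma r_incident_if_cn_sum_cong:
  assumes "indep_mset V E S" and "r_incident V E r S" and "supp V T \<subseteq> supp V S"
    and cong: "\<And>K. K \<subseteq> V - supp V S \<Longrightarrow> 2 \<le> card K \<Longrightarrow>
      cn_sum V E T K mod 2 ^ (r - 1) = cn_sum V E S K mod 2 ^ (r - 1)"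
  shows "r_incident V E r T"
  unfolding r_incident_cn_sum
proof (intro allI impI)
  fix k K
  assume "k < r" and K: "K \<subseteq> V - supp V T \<and> card K = k + 2"
  show "2 ^ (r - k - delta k) dvd cn_sum V E T K"
  proof (cases "K \<inter> supp V S = {}")
    case True
    then have "K \<subseteq> V - supp V S" using K by blast
    then have "2 ^ (r - k - delta k) dvd cn_sum V E S K"
      using assms(2) \<open>k < r\<close> K unfolding r_incident_cn_sum by blast
    moreover have "2 ^ (r - k - delta k) dvd (2::nat) ^ (r - 1)"
      by (rule le_imp_power_dvd) (auto simp: delta_def)
    moreover have "cn_sum V E T K mod 2 ^ (r - 1) = cn_sum V E S K mod 2 ^ (r - 1)"
      using cong[OF \<open>K \<subseteq> V - supp V S\<close>] K by simp
    ultimately show ?thesis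
      by (metis dvd_mod_iff)
  next
    case False
    then show ?thesis
      using cn_sum_eq_0_if_meets_supp[OF assms(1,3)] by auto
  qed
qed

lemma lc_seq_independent:
  assumes "simple_graph V E" and "indep_set E (set xs)" and "distinct xs"
  shows "lc_seq V E xs a b \<longleftrightarrow> E a b \<noteq> (a \<noteq> b \<and> odd (card {u \<in> set xs. E u a \<and> E u b}))"
  using assms
proof (induction xs arbitrary: E)
  case Nil
  then show ?case by simp
next
  case (Cons x xs)
  let ?E' = "lc V E x"
  have lc_x: "?E' a b \<longleftrightarrow> E a b \<noteq> (a \<noteq> b \<and> E x a \<and> E x b)" for a b
    using Cons.prems(1) unfolding lc_def nbr_def simple_graph_def by auto
  have lc_x_unchanged: "?E' u a = E u a" if "u \<in> set xs" for u a
    using Cons.prems(2) that unfolding lc_x indep_set_def by auto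
  have "simple_graph V ?E'"
    using Cons.prems(1) unfolding simple_graph_def lc_def nbr_def by auto
  moreover have "indep_set ?E' (set xs)"
    using Cons.prems(2) lc_x_unchanged unfolding indep_set_def by simp
  moreover have "{u \<in> set xs. ?E' u a \<and> ?E' u b} = {u \<in> set xs. E u a \<and> E u b}"
    using lc_x_unchanged by auto
  ultimately have IH: "lc_seq V ?E' xs a b \<longleftrightarrow>
      ?E' a b \<noteq> (a \<noteq> b \<and> odd (card {u \<in> set xs. E u a \<and> E u b}))"
    using Cons.IH Cons.prems(3) by simp
  have "{u \<in> set (x # xs). E u a \<and> E u b} =
      (if E x a \<and> E x b then insert x else id) {u \<in> set xs. E u a \<and> E u b}"
    by auto
  then have "card {u \<in> set (x # xs). E u a \<and> E u b} =
      card {u \<in> set xs. E u a \<and> E u b} + (if E x a \<and> E x b then 1 else 0)"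
    using Cons.prems(3) by simp
  then show ?case
    using IH lc_x by auto
qed

lemma lc1_independent:
  assumes "simple_graph V E" and "finite A" and "indep_set E A"
  shows "lc1 V E A a b \<longleftrightarrow> E a b \<noteq> (a \<noteq> b \<and> odd (card {u \<in> A. E u a \<and> E u b}))"
proof -
  let ?xs = "SOME xs. set xs = A \<and> distinct xs"
  have "set ?xs = A \<and> distinct ?xs"
    using finite_distinct_list[OF \<open>finite A\<close>] by (rule someI_ex)
  then show ?thesis
    unfolding lc1_def using lc_seq_independent[OF assms(1), of ?xs] assms(3) by simp
qed

lemma rlc_iff_odd_quotient:
  assumes "r \<ge> 1" and "a \<in> V" and "b \<in> V" and "a \<noteq> b"
    and "cn_sum V E S {a, b} = 2 ^ (r - 1) * x"
  shows "rlc V E r S a b \<longleftrightarrow> E a b \<noteq> odd x"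
proof -
  have "(2::nat) ^ r = 2 ^ (r - 1) * 2"
    using \<open>r \<ge> 1\<close> by (cases r) simp_all
  then have "cn_sum V E S {a, b} mod 2 ^ r = 2 ^ (r - 1) * (x mod 2)"
    using assms(5) by (simp add: mod_mult_mult1)
  moreover have "2 ^ (r - 1) * (x mod 2) = 2 ^ (r - 1) \<longleftrightarrow> odd x"
    by (cases "even x") (auto simp: odd_iff_mod_2_eq_one)
  ultimately show ?thesis
    using assms(2-4) unfolding rlc_cn_sum by simp
qed

lemma odd_part_subset_supp: "{u \<in> V. odd (T u)} \<subseteq> supp V T"
  unfolding supp_def by (auto simp: Suc_le_eq odd_pos)

lemma odd_cn_sum_pair_iff:
  assumes "simple_graph V E"
  shows "odd (cn_sum V E T {a, b}) \<longleftrightarrow> odd (card {u \<in> {u \<in> V. odd (T u)}. E u a \<and> E u b})"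
proof -
  have "finite (nbr V E a \<inter> nbr V E b)"
    using assms unfolding simple_graph_def nbr_def by simp
  then have "even (cn_sum V E T {a, b}) \<longleftrightarrow> even (card {u \<in> nbr V E a \<inter> nbr V E b. odd (T u)})"
    unfolding cn_sum_def by (simp add: even_sum_iff)
  moreover have "{u \<in> nbr V E a \<inter> nbr V E b. odd (T u)} = {u \<in> {u \<in> V. odd (T u)}. E u a \<and> E u b}"
    using assms unfolding simple_graph_def nbr_def by blast
  ultimately show ?thesis by simp
qed

lemma cn_sum_lc1_on_supp:
  assumes graph: "simple_graph V E" and "indep_mset V E S"
    and "A \<subseteq> supp V S" and "supp V S' \<subseteq> supp V S" and "K \<noteq> {}"
  shows "cn_sum V (lc1 V E A) S' K = cn_sum V E S' K"
proof (rule cn_sum_cong_on_supp[OF _ \<open>K \<noteq> {}\<close> \<open>supp V S' \<subseteq> supp V S\<close>])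
  show "finite V" using graph unfolding simple_graph_def by simp
  have indep: "indep_set E (A \<union> supp V S)"
    using assms(2,3) by (intro indep_set_if_subset_supp) auto
  have "lc1 V E A v w = E v w" if "w \<in> supp V S" for v w
  proof -
    have no_common: "{u \<in> A. E u v \<and> E u w} = {}"
      using indep that unfolding indep_set_def by blast
    have "finite A"
      using \<open>finite V\<close> \<open>A \<subseteq> supp V S\<close> unfolding supp_def by (auto intro: finite_subset)
    have "indep_set E A"
      using indep unfolding indep_set_def by blast
    show ?thesis
      unfolding lc1_independent[OF graph \<open>finite A\<close> \<open>indep_set E A\<close>] no_common by simp
  qed
  then show "nbr V (lc1 V E A) v \<inter> supp V S = nbr V E v \<inter> supp V S" for v
    unfolding nbr_def by blast
qed

lemma rlc_split_off_lc1:
  assumes graph: "simple_graph V E" and "r \<ge> 1"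
    and S: "indep_mset V E S" "r_incident V E r S"
    and supp_S': "supp V S' \<subseteq> supp V S" and supp_T: "supp V T \<subseteq> supp V S"
    and split: "\<And>a b. a \<in> V \<Longrightarrow> b \<in> V \<Longrightarrow> a \<noteq> b \<Longrightarrow>
      cn_sum V E S {a, b} = cn_sum V E S' {a, b} + 2 ^ (r - 1) * cn_sum V E T {a, b}"
  shows "rlc V E r S = rlc V (lc1 V E {u \<in> V. odd (T u)}) r S'"
proof (intro ext)
  fix a b
  let ?A = "{u \<in> V. odd (T u)}"
  have A_supp: "?A \<subseteq> supp V S"
    using odd_part_subset_supp supp_T by (rule order_trans)
  show "rlc V E r S a b = rlc V (lc1 V E ?A) r S' a b"
  proof (cases "a \<in> V \<and> b \<in> V \<and> a \<noteq> b")
    case False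
    then show ?thesis unfolding rlc_def by auto
  next
    case True
    then have ab: "a \<in> V" "b \<in> V" "a \<noteq> b" by auto
    obtain x where x: "cn_sum V E S {a, b} = 2 ^ (r - 1) * x"
      using r_incident_pair_dvd[OF S(2,1) \<open>r \<ge> 1\<close> ab] by blast
    then have "2 ^ (r - 1) dvd cn_sum V E S' {a, b} + 2 ^ (r - 1) * cn_sum V E T {a, b}"
      using split[OF ab] by simp
    then obtain y where y: "cn_sum V E S' {a, b} = 2 ^ (r - 1) * y"
      by (auto simp: dvd_add_left_iff)
    have "2 ^ (r - 1) * x = 2 ^ (r - 1) * (y + cn_sum V E T {a, b})"
      using split[OF ab] x y by (simp add: algebra_simps)
    then have xy: "x = y + cn_sum V E T {a, b}" by simp
    have "cn_sum V (lc1 V E ?A) S' {a, b} = 2 ^ (r - 1) * y"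
      using cn_sum_lc1_on_supp[OF graph S(1) A_supp supp_S'] y by simp
    then have "rlc V (lc1 V E ?A) r S' a b \<longleftrightarrow> lc1 V E ?A a b \<noteq> odd y"
      by (rule rlc_iff_odd_quotient[OF \<open>r \<ge> 1\<close> ab])
    moreover have "rlc V E r S a b \<longleftrightarrow> E a b \<noteq> odd x"
      by (rule rlc_iff_odd_quotient[OF \<open>r \<ge> 1\<close> ab x])
    moreover have "lc1 V E ?A a b \<longleftrightarrow> E a b \<noteq> (a \<noteq> b \<and> odd (card {u \<in> ?A. E u a \<and> E u b}))"
      using graph unfolding simple_graph_def
      by (intro lc1_independent[OF graph] indep_set_if_subset_supp[OF S(1) A_supp]) auto
    ultimately show ?thesis
      using xy odd_cn_sum_pair_iff[OF graph, of T a b] ab by auto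
  qed
qed

lemma supp_mod_subset: "supp V (\<lambda>u. M u mod m) \<subseteq> supp V M"
  and supp_div_subset: "supp V (\<lambda>u. M u div m) \<subseteq> supp V M"
  unfolding supp_def by (auto simp: Suc_le_eq intro!: gr0I)

lemma reduce_multiplicities_mod:
  assumes "simple_graph V E" and "r \<ge> 1" and S: "indep_mset V E S" "r_incident V E r S"
    and "supp V M \<subseteq> supp V S" and M: "\<And>K. 2 \<le> card K \<Longrightarrow> cn_sum V E M K = cn_sum V E S K"
  defines "S' \<equiv> \<lambda>u. M u mod 2 ^ (r - 1)" and "T \<equiv> \<lambda>u. M u div 2 ^ (r - 1)"
  shows "r_incident V E r S'" and "rlc V E r S = rlc V (lc1 V E {u \<in> V. odd (T u)}) r S'"
proof -
  have supp_S': "supp V S' \<subseteq> supp V S"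
    unfolding S'_def using supp_mod_subset \<open>supp V M \<subseteq> supp V S\<close> by (rule order_trans)
  have supp_T: "supp V T \<subseteq> supp V S"
    unfolding T_def using supp_div_subset \<open>supp V M \<subseteq> supp V S\<close> by (rule order_trans)
  have "cn_sum V E M K = cn_sum V E S' K + 2 ^ (r - 1) * cn_sum V E T K" for K
    unfolding cn_sum_def S'_def T_def sum_distrib_left sum.distrib[symmetric] by simp
  then have split: "cn_sum V E S K = cn_sum V E S' K + 2 ^ (r - 1) * cn_sum V E T K"
    if "2 \<le> card K" for K
    using M[OF that] by simp
  show "r_incident V E r S'"
  proof (rule r_incident_if_cn_sum_cong[OF S supp_S'])
    show "cn_sum V E S' K mod 2 ^ (r - 1) = cn_sum V E S K mod 2 ^ (r - 1)"
      if "K \<subseteq> V - supp V S" and "2 \<le> card K" for K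
      using split[OF that(2)] by simp
  qed
  show "rlc V E r S = rlc V (lc1 V E {u \<in> V. odd (T u)}) r S'"
  proof (rule rlc_split_off_lc1[OF assms(1,2) S supp_S' supp_T])
    show "cn_sum V E S {a, b} = cn_sum V E S' {a, b} + 2 ^ (r - 1) * cn_sum V E T {a, b}"
      if "a \<in> V" and "b \<in> V" and "a \<noteq> b" for a b
      using split[of "{a, b}"] that by simp
  qed
qed

theorem mainTheorem1:
  fixes V :: "'a set" and E :: "'a \<Rightarrow> 'a \<Rightarrow> bool" and r :: nat and S :: "'a \<Rightarrow> nat"
  assumes "simple_graph V E" and "r \<ge> 1"
    and "vmultiset V S" and "indep_mset V E S" and "r_incident V E r S"
  shows "\<exists>S' A. vmultiset V S' \<and> indep_mset V E S' \<and> r_incident V E r S'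
     \<and> A \<subseteq> V \<and> indep_set E A
     \<and> (\<forall>u\<in>supp V S'. \<forall>v\<in>supp V S'. u \<noteq> v \<longrightarrow> \<not> twins V E u v)
     \<and> (\<forall>u\<in>supp V S'. card (nbr V E u) \<ge> 2)
     \<and> (\<forall>u. S' u < 2 ^ (r - 1))
     \<and> rlc V E r S = rlc V (lc1 V E A) r S'"
proof -
  obtain M where M: "vmultiset V M" "supp V M \<subseteq> supp V S"
    "\<And>u v. u \<in> supp V M \<Longrightarrow> v \<in> supp V M \<Longrightarrow> u \<noteq> v \<Longrightarrow> \<not> twins V E u v"
    "\<And>u. u \<in> supp V M \<Longrightarrow> 2 \<le> card (nbr V E u)"
    "\<And>K. 2 \<le> card K \<Longrightarrow> cn_sum V E M K = cn_sum V E S K"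
    using reduced_multiset[OF assms(1,4)] by blast
  define S' where "S' = (\<lambda>u. M u mod 2 ^ (r - 1))"
  define A where "A = {u \<in> V. odd (M u div 2 ^ (r - 1))}"
  have supp_S': "supp V S' \<subseteq> supp V M"
    unfolding S'_def by (rule supp_mod_subset)
  have "A \<subseteq> supp V M"
    unfolding A_def using odd_part_subset_supp supp_div_subset by (rule order_trans)
  then have "indep_set E A"
    using M(2) by (intro indep_set_if_subset_supp[OF assms(4)]) (rule order_trans)
  moreover have "indep_mset V E S'"
    unfolding indep_mset_def using supp_S' M(2)
    by (intro indep_set_if_subset_supp[OF assms(4)]) (rule order_trans)
  moreover have "vmultiset V S'"
    using M(1) unfolding vmultiset_def S'_def by simp
  moreover have "r_incident V E r S'" and "rlc V E r S = rlc V (lc1 V E A) r S'"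
    using reduce_multiplicities_mod[OF assms(1,2,4,5) M(2,5)] unfolding S'_def A_def by simp_all
  moreover have "\<forall>u\<in>supp V S'. \<forall>v\<in>supp V S'. u \<noteq> v \<longrightarrow> \<not> twins V E u v"
    using supp_S' M(3) by (meson subsetD)
  moreover have "\<forall>u\<in>supp V S'. card (nbr V E u) \<ge> 2"
    using supp_S' M(4) by (meson subsetD)
  moreover have "\<forall>u. S' u < 2 ^ (r - 1)" and "A \<subseteq> V"
    unfolding S'_def A_def by auto
  ultimately show ?thesis
    by blast
qed

end
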